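(* In NLML, define $fresh_{\tau;\alpha}(x) := \exists a{:}\alpha.\ a\wedge\lceil a\# x\rceil$. Then the following are valid in NLML: (F1') $(fresh(x)\ fresh(x))\cdot x = x$; (F2') $fresh_{\alpha;\alpha}(a{:}\alpha)=\neg a$; (F3') $fresh_{\alpha;\alpha'}(a{:}\alpha)=\top_{\alpha'}$ for name sorts $\alpha\neq\alpha'$; (F4') $\forall x{:}\tau.\exists a{:}\alpha.\ a\in fresh(x)$. Conversely, the nominal-logic freshness axioms (F1) $a\#x\wedge a'\#x\Rightarrow (a\ a')\cdot x=x$, (F2) $a\#a'\iff a\neq a'$, (F3) $\forall a{:}\alpha,a'{:}\alpha'.\ a\#a'$ ($\alpha\ne\alpha'$), and (F4) $\forall\vec x.\exists a.\ a\#\vec x$ are provable from (F1')–(F4').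
   Context: Matching logic semantics: patterns denote sets; symbols (such as swapping $(-\ -)\cdot -$) applied to patterns are interpreted by pointwise extension to sets of arguments; $M_{Pred}=\{\star\}$; $\lceil\cdot\rceil$ coerces a $Pred$-pattern to another sort ($\{\star\}\mapsto$ whole carrier, $\emptyset\mapsto\emptyset$); $x\in\phi$ abbreviates $x\vee\phi=\phi$; $\neg$ is complement; $\top_{\alpha'}$ denotes the whole carrier of $\alpha'$. Sorts are closed under finite products, so $\tau$ may be a product sort. NLML is matching logic over a nominal-logic signature (name sorts, swapping $(a\ b)\cdot x$, abstraction $[a]x$, freshness predicate $a\#x$ with result sort $Pred$) with axiom set $Ax_{NLML}$: (S1) $(a\ a)\cdot x=x$; (S2) $(a\ a')\cdot(a\ a')\cdot x=x$; (S3) $(a\ a')\cdot a=a'$; (EV) $(a\ b)\cdot\sigma(\vec x)=\sigma((a\ b)\cdot\vec x)$ for every symbol $\sigma$; (P) $\forall x{:}Pred.\ x=\top_{Pred}$; (F1)–(F4) as in the claim; (A1) $[a]x=[a']x' \iff (a=a'\wedge x=x')\vee(a\#x'\wedge (a\ a')\cdot x=x')$; (A2) $\forall x{:}[\alpha]\tau.\exists a,y.\ x=[a]y$; and function axioms for constants and function symbols. *)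

theory Defs
  imports Main
begin

(* Semantic (model-theoretic) rendering of NLML: matching logic over a
   nominal-logic signature.  Patterns denote sets of elements; symbols are
   interpreted as functions into sets, extended pointwise to sets of arguments. *)

datatype ('n,'d) nsort =
    NameS 'n
  | DataS 'd
  | PredS
  | AbsS 'n "('n,'d) nsort"
  | ProdS "('n,'d) nsort list"

(* A matching-logic model of the nominal signature.
   car s           : carrier of sort s
   sw alpha tau a b x : interpretation of swapping (a b).x, a b : alpha, x : tau
   fr alpha tau a x   : interpretation of freshness a # x (result sort Pred)
   ab alpha tau a x   : interpretation of abstraction [a]x (result sort [alpha]tau)
   sy f xs         : interpretation of the remaining signature symbols
                     (constants, function symbols, predicate symbols,
                      pairing/projection symbols of product sorts, ...) *)
record ('n,'d,'f,'m) nlml_model =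
  car :: "('n,'d) nsort \<Rightarrow> 'm set"
  sw  :: "'n \<Rightarrow> ('n,'d) nsort \<Rightarrow> 'm \<Rightarrow> 'm \<Rightarrow> 'm \<Rightarrow> 'm set"
  fr  :: "'n \<Rightarrow> ('n,'d) nsort \<Rightarrow> 'm \<Rightarrow> 'm \<Rightarrow> 'm set"
  ab  :: "'n \<Rightarrow> ('n,'d) nsort \<Rightarrow> 'm \<Rightarrow> 'm \<Rightarrow> 'm set"
  sy  :: "'f \<Rightarrow> 'm list \<Rightarrow> 'm set"

definition swSet :: "('n,'d,'f,'m) nlml_model \<Rightarrow> 'n \<Rightarrow> ('n,'d) nsort \<Rightarrow> 'm set \<Rightarrow> 'm set \<Rightarrow> 'm set \<Rightarrow> 'm set" where
  "swSet M \<alpha> \<tau> A B X = (\<Union>a\<in>A. \<Union>b\<in>B. \<Union>x\<in>X. sw M \<alpha> \<tau> a b x)"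

definition frSet :: "('n,'d,'f,'m) nlml_model \<Rightarrow> 'n \<Rightarrow> ('n,'d) nsort \<Rightarrow> 'm set \<Rightarrow> 'm set \<Rightarrow> 'm set" where
  "frSet M \<alpha> \<tau> A X = (\<Union>a\<in>A. \<Union>x\<in>X. fr M \<alpha> \<tau> a x)"

definition abSet :: "('n,'d,'f,'m) nlml_model \<Rightarrow> 'n \<Rightarrow> ('n,'d) nsort \<Rightarrow> 'm set \<Rightarrow> 'm set \<Rightarrow> 'm set" where
  "abSet M \<alpha> \<tau> A X = (\<Union>a\<in>A. \<Union>x\<in>X. ab M \<alpha> \<tau> a x)"

definition sySet :: "('n,'d,'f,'m) nlml_model \<Rightarrow> 'f \<Rightarrow> 'm set list \<Rightarrow> 'm set" where
  "sySet M f Xs = \<Union>{sy M f ys | ys. list_all2 (\<lambda>y Y. y \<in> Y) ys Xs}"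

definition argsIn :: "('n,'d,'f,'m) nlml_model \<Rightarrow> ('n,'d) nsort list \<Rightarrow> 'm list \<Rightarrow> bool" where
  "argsIn M ss xs = list_all2 (\<lambda>x s. x \<in> car M s) xs ss"

definition ceil :: "('n,'d,'f,'m) nlml_model \<Rightarrow> ('n,'d) nsort \<Rightarrow> 'm set \<Rightarrow> 'm set" where
  "ceil M s P = (if P = {} then {} else car M s)"

(* Signature: ar f = (argument sorts, result sort); isf f: f is a constant /
   function symbol (subject to the function axiom). *)

definition nlml_wf :: "('f \<Rightarrow> ('n,'d) nsort list \<times> ('n,'d) nsort) \<Rightarrow> ('n,'d,'f,'m) nlml_model \<Rightarrow> bool" where
  "nlml_wf ar M \<longleftrightarrow>
     (\<forall>s. car M s \<noteq> {}) \<and>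
     (\<forall>\<alpha> \<tau> a b x. a \<in> car M (NameS \<alpha>) \<longrightarrow> b \<in> car M (NameS \<alpha>) \<longrightarrow> x \<in> car M \<tau> \<longrightarrow>
         sw M \<alpha> \<tau> a b x \<subseteq> car M \<tau>) \<and>
     (\<forall>\<alpha> \<tau> a x. a \<in> car M (NameS \<alpha>) \<longrightarrow> x \<in> car M \<tau> \<longrightarrow> fr M \<alpha> \<tau> a x \<subseteq> car M PredS) \<and>
     (\<forall>\<alpha> \<tau> a x. a \<in> car M (NameS \<alpha>) \<longrightarrow> x \<in> car M \<tau> \<longrightarrow> ab M \<alpha> \<tau> a x \<subseteq> car M (AbsS \<alpha> \<tau>)) \<and>
     (\<forall>f xs. argsIn M (fst (ar f)) xs \<longrightarrow> sy M f xs \<subseteq> car M (snd (ar f)))"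

definition nlml_fun :: "('f \<Rightarrow> ('n,'d) nsort list \<times> ('n,'d) nsort) \<Rightarrow> ('f \<Rightarrow> bool) \<Rightarrow> ('n,'d,'f,'m) nlml_model \<Rightarrow> bool" where
  "nlml_fun ar isf M \<longleftrightarrow>
     (\<forall>\<alpha> \<tau> a b x. a \<in> car M (NameS \<alpha>) \<longrightarrow> b \<in> car M (NameS \<alpha>) \<longrightarrow> x \<in> car M \<tau> \<longrightarrow>
         (\<exists>y\<in>car M \<tau>. sw M \<alpha> \<tau> a b x = {y})) \<and>
     (\<forall>\<alpha> \<tau> a x. a \<in> car M (NameS \<alpha>) \<longrightarrow> x \<in> car M \<tau> \<longrightarrow>
         (\<exists>y\<in>car M (AbsS \<alpha> \<tau>). ab M \<alpha> \<tau> a x = {y})) \<and>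
     (\<forall>f xs. isf f \<longrightarrow> argsIn M (fst (ar f)) xs \<longrightarrow>
         (\<exists>y\<in>car M (snd (ar f)). sy M f xs = {y}))"

definition nlml_P :: "('n,'d,'f,'m) nlml_model \<Rightarrow> bool" where
  "nlml_P M \<longleftrightarrow> (\<forall>x\<in>car M PredS. {x} = car M PredS)"

definition nlml_S :: "('n,'d,'f,'m) nlml_model \<Rightarrow> bool" where
  "nlml_S M \<longleftrightarrow>
     (\<forall>\<alpha> \<tau>. \<forall>a\<in>car M (NameS \<alpha>). \<forall>x\<in>car M \<tau>. sw M \<alpha> \<tau> a a x = {x}) \<and>
     (\<forall>\<alpha> \<tau>. \<forall>a\<in>car M (NameS \<alpha>). \<forall>a'\<in>car M (NameS \<alpha>). \<forall>x\<in>car M \<tau>.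
         swSet M \<alpha> \<tau> {a} {a'} (sw M \<alpha> \<tau> a a' x) = {x}) \<and>
     (\<forall>\<alpha>. \<forall>a\<in>car M (NameS \<alpha>). \<forall>a'\<in>car M (NameS \<alpha>). sw M \<alpha> (NameS \<alpha>) a a' a = {a'})"

definition nlml_EV :: "('f \<Rightarrow> ('n,'d) nsort list \<times> ('n,'d) nsort) \<Rightarrow> ('n,'d,'f,'m) nlml_model \<Rightarrow> bool" where
  "nlml_EV ar M \<longleftrightarrow>
     (\<forall>\<alpha> \<alpha>' \<tau>. \<forall>a\<in>car M (NameS \<alpha>). \<forall>b\<in>car M (NameS \<alpha>).
        \<forall>c\<in>car M (NameS \<alpha>'). \<forall>d\<in>car M (NameS \<alpha>'). \<forall>x\<in>car M \<tau>.
        swSet M \<alpha> \<tau> {a} {b} (sw M \<alpha>' \<tau> c d x) =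
        swSet M \<alpha>' \<tau> (sw M \<alpha> (NameS \<alpha>') a b c) (sw M \<alpha> (NameS \<alpha>') a b d) (sw M \<alpha> \<tau> a b x)) \<and>
     (\<forall>\<alpha> \<alpha>' \<tau>. \<forall>a\<in>car M (NameS \<alpha>). \<forall>b\<in>car M (NameS \<alpha>).
        \<forall>c\<in>car M (NameS \<alpha>'). \<forall>x\<in>car M \<tau>.
        swSet M \<alpha> PredS {a} {b} (fr M \<alpha>' \<tau> c x) =
        frSet M \<alpha>' \<tau> (sw M \<alpha> (NameS \<alpha>') a b c) (sw M \<alpha> \<tau> a b x)) \<and>
     (\<forall>\<alpha> \<alpha>' \<tau>. \<forall>a\<in>car M (NameS \<alpha>). \<forall>b\<in>car M (NameS \<alpha>).
        \<forall>c\<in>car M (NameS \<alpha>'). \<forall>x\<in>car M \<tau>.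
        swSet M \<alpha> (AbsS \<alpha>' \<tau>) {a} {b} (ab M \<alpha>' \<tau> c x) =
        abSet M \<alpha>' \<tau> (sw M \<alpha> (NameS \<alpha>') a b c) (sw M \<alpha> \<tau> a b x)) \<and>
     (\<forall>\<alpha> f xs. \<forall>a\<in>car M (NameS \<alpha>). \<forall>b\<in>car M (NameS \<alpha>).
        argsIn M (fst (ar f)) xs \<longrightarrow>
        swSet M \<alpha> (snd (ar f)) {a} {b} (sy M f xs) =
        sySet M f (map2 (\<lambda>x s. sw M \<alpha> s a b x) xs (fst (ar f))))"

definition nlml_A :: "('n,'d,'f,'m) nlml_model \<Rightarrow> bool" where
  "nlml_A M \<longleftrightarrow>
     (\<forall>\<alpha> \<tau>. \<forall>a\<in>car M (NameS \<alpha>). \<forall>a'\<in>car M (NameS \<alpha>). \<forall>x\<in>car M \<tau>. \<forall>x'\<in>car M \<tau>.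
        ab M \<alpha> \<tau> a x = ab M \<alpha> \<tau> a' x' \<longleftrightarrow>
        ((a = a' \<and> x = x') \<or> (fr M \<alpha> \<tau> a x' \<noteq> {} \<and> sw M \<alpha> \<tau> a a' x = {x'}))) \<and>
     (\<forall>\<alpha> \<tau>. \<forall>x\<in>car M (AbsS \<alpha> \<tau>). \<exists>a\<in>car M (NameS \<alpha>). \<exists>y\<in>car M \<tau>. {x} = ab M \<alpha> \<tau> a y)"

(* Ax_NLML without the freshness axioms (F1)-(F4) *)
definition nlml_base :: "('f \<Rightarrow> ('n,'d) nsort list \<times> ('n,'d) nsort) \<Rightarrow> ('f \<Rightarrow> bool) \<Rightarrow> ('n,'d,'f,'m) nlml_model \<Rightarrow> bool" where
  "nlml_base ar isf M \<longleftrightarrow> nlml_wf ar M \<and> nlml_fun ar isf M \<and> nlml_P M \<and> nlml_S M \<and> nlml_EV ar M \<and> nlml_A M"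

(* nominal-logic freshness axioms (F1)-(F4), validity in M; a Pred-pattern
   holds iff its interpretation is nonempty (i.e. = {star}) *)
definition nlml_F1to4 :: "('n,'d,'f,'m) nlml_model \<Rightarrow> bool" where
  "nlml_F1to4 M \<longleftrightarrow>
     (\<forall>\<alpha> \<tau>. \<forall>a\<in>car M (NameS \<alpha>). \<forall>a'\<in>car M (NameS \<alpha>). \<forall>x\<in>car M \<tau>.
        fr M \<alpha> \<tau> a x \<noteq> {} \<and> fr M \<alpha> \<tau> a' x \<noteq> {} \<longrightarrow> sw M \<alpha> \<tau> a a' x = {x}) \<and>
     (\<forall>\<alpha>. \<forall>a\<in>car M (NameS \<alpha>). \<forall>a'\<in>car M (NameS \<alpha>).
        fr M \<alpha> (NameS \<alpha>) a a' \<noteq> {} \<longleftrightarrow> a \<noteq> a') \<and>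
     (\<forall>\<alpha> \<alpha>'. \<alpha> \<noteq> \<alpha>' \<longrightarrow> (\<forall>a\<in>car M (NameS \<alpha>). \<forall>a'\<in>car M (NameS \<alpha>').
        fr M \<alpha> (NameS \<alpha>') a a' \<noteq> {})) \<and>
     (\<forall>\<alpha> \<tau>. \<forall>x\<in>car M \<tau>. \<exists>a\<in>car M (NameS \<alpha>). fr M \<alpha> \<tau> a x \<noteq> {})"

definition freshP :: "('n,'d,'f,'m) nlml_model \<Rightarrow> 'n \<Rightarrow> ('n,'d) nsort \<Rightarrow> 'm \<Rightarrow> 'm set" where
  "freshP M \<alpha> \<tau> x = (\<Union>a\<in>car M (NameS \<alpha>). {a} \<inter> ceil M (NameS \<alpha>) (fr M \<alpha> \<tau> a x))"

definition nlml_F1'to4' :: "('n,'d,'f,'m) nlml_model \<Rightarrow> bool" where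
  "nlml_F1'to4' M \<longleftrightarrow>
     (\<forall>\<alpha> \<tau>. \<forall>x\<in>car M \<tau>. swSet M \<alpha> \<tau> (freshP M \<alpha> \<tau> x) (freshP M \<alpha> \<tau> x) {x} = {x}) \<and>
     (\<forall>\<alpha>. \<forall>a\<in>car M (NameS \<alpha>). freshP M \<alpha> (NameS \<alpha>) a = car M (NameS \<alpha>) - {a}) \<and>
     (\<forall>\<alpha> \<alpha>'. \<alpha> \<noteq> \<alpha>' \<longrightarrow> (\<forall>a\<in>car M (NameS \<alpha>). freshP M \<alpha>' (NameS \<alpha>) a = car M (NameS \<alpha>'))) \<and>
     (\<forall>\<alpha> \<tau>. \<forall>x\<in>car M \<tau>. \<exists>a\<in>car M (NameS \<alpha>). {a} \<union> freshP M \<alpha> \<tau> x = freshP M \<alpha> \<tau> x)"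

end

theory Submission
  imports Defs
begin

text \<open>Each primed axiom is the unprimed one read through the set of fresh names:
  (F2')-(F4') say which names lie in that set and are pointwise equivalent to (F2)-(F4);
  (F1') says the swaps of two fresh names fix \<open>x\<close>, which is (F1) as long as swapping is a
  function (so that a swap contained in \<open>{x}\<close> equals \<open>{x}\<close>) and, for the converse, some
  fresh name exists, which is (F4).\<close>

lemma freshP_eq: "freshP M \<alpha> \<tau> x = {a \<in> car M (NameS \<alpha>). fr M \<alpha> \<tau> a x \<noteq> {}}"
  unfolding freshP_def ceil_def by (auto split: if_splits)

lemma swSet_freshP_eq_singleton_iff:
  assumes sw_fun: "\<And>a a'. a \<in> car M (NameS \<alpha>) \<Longrightarrow> a' \<in> car M (NameS \<alpha>) \<Longrightarrow> \<exists>y. sw M \<alpha> \<tau> a a' x = {y}"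
    and fresh_ex: "\<exists>a\<in>car M (NameS \<alpha>). fr M \<alpha> \<tau> a x \<noteq> {}"
  shows "swSet M \<alpha> \<tau> (freshP M \<alpha> \<tau> x) (freshP M \<alpha> \<tau> x) {x} = {x} \<longleftrightarrow>
    (\<forall>a\<in>car M (NameS \<alpha>). \<forall>a'\<in>car M (NameS \<alpha>).
       fr M \<alpha> \<tau> a x \<noteq> {} \<and> fr M \<alpha> \<tau> a' x \<noteq> {} \<longrightarrow> sw M \<alpha> \<tau> a a' x = {x})"
    (is "?swaps = {x} \<longleftrightarrow> ?F1")
proof
  assume "?swaps = {x}"
  show ?F1
  proof (intro ballI impI)
    fix a a' assume a: "a \<in> car M (NameS \<alpha>)" and a': "a' \<in> car M (NameS \<alpha>)"
      and fresh: "fr M \<alpha> \<tau> a x \<noteq> {} \<and> fr M \<alpha> \<tau> a' x \<noteq> {}"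
    have "sw M \<alpha> \<tau> a a' x \<subseteq> {x}"
      using \<open>?swaps = {x}\<close> a a' fresh unfolding swSet_def freshP_eq by blast
    moreover obtain y where "sw M \<alpha> \<tau> a a' x = {y}" using sw_fun a a' by blast
    ultimately show "sw M \<alpha> \<tau> a a' x = {x}" by auto
  qed
next
  assume ?F1
  then show "?swaps = {x}"
    using fresh_ex unfolding swSet_def freshP_eq by auto
qed

lemma freshP_same_sort_iff:
  assumes "a' \<in> car M (NameS \<alpha>)"
  shows "freshP M \<alpha> (NameS \<alpha>) a' = car M (NameS \<alpha>) - {a'} \<longleftrightarrow>
    (\<forall>a\<in>car M (NameS \<alpha>). fr M \<alpha> (NameS \<alpha>) a a' \<noteq> {} \<longleftrightarrow> a \<noteq> a')"
  using assms unfolding freshP_eq by blast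

lemma freshP_eq_car_iff:
  "freshP M \<alpha> \<tau> x = car M (NameS \<alpha>) \<longleftrightarrow> (\<forall>a\<in>car M (NameS \<alpha>). fr M \<alpha> \<tau> a x \<noteq> {})"
  unfolding freshP_eq by blast

lemma ex_mem_freshP_iff:
  "(\<exists>a\<in>car M (NameS \<alpha>). {a} \<union> freshP M \<alpha> \<tau> x = freshP M \<alpha> \<tau> x) \<longleftrightarrow>
    (\<exists>a\<in>car M (NameS \<alpha>). fr M \<alpha> \<tau> a x \<noteq> {})"
  unfolding freshP_eq by blast

lemma nlml_F1to4_iff_F1'to4':
  assumes "nlml_fun ar isf M"
  shows "nlml_F1to4 M \<longleftrightarrow> nlml_F1'to4' M"
proof -
  have sw_fun: "\<exists>y. sw M \<alpha> \<tau> a a' x = {y}"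
    if "a \<in> car M (NameS \<alpha>)" "a' \<in> car M (NameS \<alpha>)" "x \<in> car M \<tau>" for \<alpha> \<tau> a a' x
    using assms that unfolding nlml_fun_def by blast
  let ?F4 = "\<forall>\<alpha> \<tau>. \<forall>x\<in>car M \<tau>. \<exists>a\<in>car M (NameS \<alpha>). fr M \<alpha> \<tau> a x \<noteq> {}"
  have F3_iff: "(\<forall>\<alpha> \<alpha>'. \<alpha> \<noteq> \<alpha>' \<longrightarrow> (\<forall>a\<in>car M (NameS \<alpha>). \<forall>a'\<in>car M (NameS \<alpha>').
                  fr M \<alpha> (NameS \<alpha>') a a' \<noteq> {})) \<longleftrightarrow>
               (\<forall>\<alpha> \<alpha>'. \<alpha> \<noteq> \<alpha>' \<longrightarrow> (\<forall>a\<in>car M (NameS \<alpha>). freshP M \<alpha>' (NameS \<alpha>) a = car M (NameS \<alpha>')))"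
    (is "?F3 \<longleftrightarrow> ?F3'")
  proof
    assume ?F3
    show ?F3'
    proof (intro allI impI ballI)
      fix \<alpha> \<alpha>' a assume "\<alpha> \<noteq> \<alpha>'" "a \<in> car M (NameS \<alpha>)"
      moreover have "\<alpha>' \<noteq> \<alpha>" using \<open>\<alpha> \<noteq> \<alpha>'\<close> by simp
      ultimately show "freshP M \<alpha>' (NameS \<alpha>) a = car M (NameS \<alpha>')"
        using \<open>?F3\<close> unfolding freshP_eq_car_iff by blast
    qed
  next
    assume ?F3'
    show ?F3
    proof (intro allI impI ballI)
      fix \<alpha> \<alpha>' a a' assume "\<alpha> \<noteq> \<alpha>'" "a \<in> car M (NameS \<alpha>)" "a' \<in> car M (NameS \<alpha>')"
      moreover have "\<alpha>' \<noteq> \<alpha>" using \<open>\<alpha> \<noteq> \<alpha>'\<close> by simp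
      ultimately show "fr M \<alpha> (NameS \<alpha>') a a' \<noteq> {}"
        using \<open>?F3'\<close> unfolding freshP_eq_car_iff by blast
    qed
  qed
  have F2_iff: "(\<forall>\<alpha>. \<forall>a\<in>car M (NameS \<alpha>). \<forall>a'\<in>car M (NameS \<alpha>).
                  fr M \<alpha> (NameS \<alpha>) a a' \<noteq> {} \<longleftrightarrow> a \<noteq> a') \<longleftrightarrow>
               (\<forall>\<alpha>. \<forall>a\<in>car M (NameS \<alpha>). freshP M \<alpha> (NameS \<alpha>) a = car M (NameS \<alpha>) - {a})"
    by (simp add: freshP_same_sort_iff) blast
  have F4_iff: "?F4 \<longleftrightarrow> (\<forall>\<alpha> \<tau>. \<forall>x\<in>car M \<tau>. \<exists>a\<in>car M (NameS \<alpha>).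
                  {a} \<union> freshP M \<alpha> \<tau> x = freshP M \<alpha> \<tau> x)"
    unfolding ex_mem_freshP_iff ..
  have F1_iff: "(\<forall>\<alpha> \<tau>. \<forall>a\<in>car M (NameS \<alpha>). \<forall>a'\<in>car M (NameS \<alpha>). \<forall>x\<in>car M \<tau>.
                  fr M \<alpha> \<tau> a x \<noteq> {} \<and> fr M \<alpha> \<tau> a' x \<noteq> {} \<longrightarrow> sw M \<alpha> \<tau> a a' x = {x}) \<longleftrightarrow>
               (\<forall>\<alpha> \<tau>. \<forall>x\<in>car M \<tau>. swSet M \<alpha> \<tau> (freshP M \<alpha> \<tau> x) (freshP M \<alpha> \<tau> x) {x} = {x})"
    if F4: ?F4
  proof -
    have "swSet M \<alpha> \<tau> (freshP M \<alpha> \<tau> x) (freshP M \<alpha> \<tau> x) {x} = {x} \<longleftrightarrow>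
      (\<forall>a\<in>car M (NameS \<alpha>). \<forall>a'\<in>car M (NameS \<alpha>).
         fr M \<alpha> \<tau> a x \<noteq> {} \<and> fr M \<alpha> \<tau> a' x \<noteq> {} \<longrightarrow> sw M \<alpha> \<tau> a a' x = {x})"
      if x: "x \<in> car M \<tau>" for \<alpha> \<tau> x
      using swSet_freshP_eq_singleton_iff[of M \<alpha> \<tau> x] sw_fun[OF _ _ x] F4 x by blast
    then show ?thesis by (simp cong: ball_cong) blast
  qed
  show ?thesis
    unfolding nlml_F1to4_def nlml_F1'to4'_def F2_iff F3_iff F4_iff[symmetric]
    by (intro iffI conjI; elim conjE; use F1_iff in blast)
qed

theorem mainTheorem4:
  fixes ar :: "'f \<Rightarrow> ('n,'d) nsort list \<times> ('n,'d) nsort"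
    and isf :: "'f \<Rightarrow> bool"
    and M :: "('n,'d,'f,'m) nlml_model"
  assumes "nlml_base ar isf M"
  shows "(nlml_F1to4 M \<longrightarrow> nlml_F1'to4' M) \<and> (nlml_F1'to4' M \<longrightarrow> nlml_F1to4 M)"
  using nlml_F1to4_iff_F1'to4' assms unfolding nlml_base_def by blast

end
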